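(* Let $f=Fe_3F^*:D\to S^3_1$ be a CMC $1$ face with Weierstrass data $(g,\omega=h\,dz)$ and holomorphic null lift $F$, let $p\in\Sigma(f)$ be a non-degenerate singular point at which $f$ is not a front (equivalently $\operatorname{Re}\varphi(p)=0$), and let $\zeta$ be the vector field defined below. Then, with all quantities evaluated at $p$, $$\zeta^2f(p)=-2\sqrt{-1}\,\operatorname{Im}\varphi\;F\begin{pmatrix}0&g\\-\bar g&0\end{pmatrix}F^*,\qquad \zeta^3f(p)=2\sqrt{-1}\,\operatorname{Im}\varphi\,\operatorname{Im}(V\varphi)\;F\begin{pmatrix}0&g\\-\bar g&0\end{pmatrix}F^*.$$
   Context: $S^3_1=\{X\in\mathrm{Herm}(2):\det X=-1\}$. Given a domain $D\subset\mathbb{C}$, meromorphic $g$ and holomorphic $\omega=h\,dz$ with $(1+|g|^2)^2|\omega|^2$ Riemannian and $1-|g|^2\not\equiv0$, $F:D\to SL(2,\mathbb{C})$ is holomorphic with $F^{-1}dF=\begin{pmatrix}g&-g^2\\1&-g\end{pmatrix}\omega$, $F^*=\bar F^T$, and $f=Fe_3F^*$ with $e_3=\mathrm{diag}(1,-1)$ (a matrix-valued map). Singular set $\Sigma(f)=\{|g|=1\}$; $p$ non-degenerate means $dg(p)\ne0$. $\varphi=g_z/(g^2h)$, $V\psi=g\psi_z/g_z$. Set $\lambda=1-|g|^2$ and $\kappa=-\sqrt{-1}\,g(p)/(2g_z(p))$ and define the (null) vector field $\zeta=\left(\frac{\sqrt{-1}}{gh}+\kappa\lambda^2\right)\frac{\partial}{\partial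 z}+\left(-\frac{\sqrt{-1}}{\bar g\bar h}+\bar\kappa\lambda^2\right)\frac{\partial}{\partial\bar z}$; $\zeta^jf$ denotes the $j$-fold derivative of $f$ (entrywise) along $\zeta$. *)

theory Defs
  imports "HOL-Analysis.Analysis" "HOL-Complex_Analysis.Complex_Analysis"
begin

definition mat2 :: "complex \<Rightarrow> complex \<Rightarrow> complex \<Rightarrow> complex \<Rightarrow> complex^2^2" where
  "mat2 a b c d = (\<chi> i j. if i = 1 then (if j = 1 then a else b) else (if j = 1 then c else d))"

definition cstar :: "complex^2^2 \<Rightarrow> complex^2^2" where
  "cstar X = (\<chi> i j. cnj (X $ j $ i))"

definition smat :: "complex \<Rightarrow> complex^2^2 \<Rightarrow> complex^2^2" where
  "smat c X = (\<chi> i j. c * X $ i $ j)"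

definition e3 :: "complex^2^2" where
  "e3 = mat2 1 0 0 (-1)"

definition cmc1_f :: "(complex \<Rightarrow> complex^2^2) \<Rightarrow> complex \<Rightarrow> complex^2^2" where
  "cmc1_f F z = F z ** e3 ** cstar (F z)"

definition phi_fn :: "(complex \<Rightarrow> complex) \<Rightarrow> (complex \<Rightarrow> complex) \<Rightarrow> complex \<Rightarrow> complex" where
  "phi_fn g h z = deriv g z / ((g z)^2 * h z)"

definition V_op :: "(complex \<Rightarrow> complex) \<Rightarrow> (complex \<Rightarrow> complex) \<Rightarrow> complex \<Rightarrow> complex" where
  "V_op g \<psi> z = g z * deriv \<psi> z / deriv g z"

definition kappa :: "(complex \<Rightarrow> complex) \<Rightarrow> complex \<Rightarrow> complex" where
  "kappa g p = - \<i> * g p / (2 * deriv g p)"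

text \<open>The real vector field zeta = a d/dz + conj(a) d/dzbar, with
  a = i/(g h) + kappa lambda^2, lambda = 1 - |g|^2.  As a real vector field on
  the plane (identified with C) it is the vector a(z) = Re a d/dx + Im a d/dy.\<close>
definition zeta_coef :: "(complex \<Rightarrow> complex) \<Rightarrow> (complex \<Rightarrow> complex) \<Rightarrow> complex \<Rightarrow> complex \<Rightarrow> complex" where
  "zeta_coef g h p z = \<i> / (g z * h z) + kappa g p * complex_of_real ((1 - (norm (g z))^2)^2)"

definition dir_deriv :: "(complex \<Rightarrow> complex) \<Rightarrow> (complex \<Rightarrow> 'b::real_normed_vector) \<Rightarrow> complex \<Rightarrow> 'b" where
  "dir_deriv a u z = frechet_derivative u (at z) (a z)"

fun dir_deriv_pow :: "nat \<Rightarrow> (complex \<Rightarrow> complex) \<Rightarrow> (complex \<Rightarrow> 'b::real_normed_vector) \<Rightarrow> complex \<Rightarrow> 'b" where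
  "dir_deriv_pow 0 a u = u"
| "dir_deriv_pow (Suc n) a u = dir_deriv a (dir_deriv_pow n a u)"

end

theory Submission
  imports Defs
begin

(* Write B = F^{-1} (\<zeta>F) = \<omega>(\<zeta>) A, where F^{-1} dF = A \<omega>. Differentiating f = F e3 F^* along \<zeta>
   gives \<zeta>^n f = F M_n F^* with M_0 = e3 and M_(n+1) = \<zeta>M_n + B M_n + M_n B^*. At the singular
   point |g| = 1 and \<lambda> = 0, so \<omega>(\<zeta>) = i/g there and M_1(p) = 0; hence M_2(p) = \<zeta>M_1(p) and
   M_3(p) = \<zeta>\<zeta>M_1(p) + 2 B(p) \<zeta>M_1(p) + 2 \<zeta>M_1(p) B(p)^*. The entries of M_1 are explicit in g
   and \<omega>(\<zeta>) = i/g + \<kappa> \<lambda>^2 h; their \<zeta>-derivatives at p are computed using Re \<phi>(p) = 0 to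
   eliminate the conjugate of g'(p). The term \<kappa> \<lambda>^2 contributes only to the second derivatives,
   through (\<zeta>\<lambda>)^2, and the choice of \<kappa> makes the diagonal of M_3(p) vanish. *)

(* vec_nth and fps_nth share the infix $, and the resulting ambiguity makes
   matrix terms parse exponentially slowly. *)
unbundle no Formal_Power_Series.fps_syntax

section \<open>Directional derivatives\<close>

lemma dir_deriv_eqI: "(u has_derivative u') (at z) \<Longrightarrow> dir_deriv a u z = u' (a z)"
  unfolding dir_deriv_def by (metis frechet_derivative_at)

lemma dir_deriv_cong:
  assumes "open S" "z \<in> S" "\<And>w. w \<in> S \<Longrightarrow> v w = u w"
  shows "dir_deriv a v z = dir_deriv a u z"
proof -
  have "(v has_derivative D) (at z) \<longleftrightarrow> (u has_derivative D) (at z)" for D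
    using assms has_derivative_transform_within_open[of _ _ z UNIV S] by metis
  then show ?thesis
    unfolding dir_deriv_def frechet_derivative_def by simp
qed

lemma dir_deriv_const [simp]: "dir_deriv a (\<lambda>w. c) z = 0"
  using dir_deriv_eqI[OF has_derivative_const] .

lemma dir_deriv_field:
  "(u has_field_derivative u') (at z) \<Longrightarrow> dir_deriv a u z = u' * a z"
  unfolding has_field_derivative_def by (rule dir_deriv_eqI)

context
  fixes u v :: "complex \<Rightarrow> 'b::real_normed_vector" and z :: complex
  assumes u: "u differentiable (at z)" and v: "v differentiable (at z)"
begin

lemma dir_deriv_add:
  "dir_deriv a (\<lambda>w. u w + v w) z = dir_deriv a u z + dir_deriv a v z"
  using dir_deriv_eqI[OF has_derivative_add[OF u[unfolded frechet_derivative_works]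
      v[unfolded frechet_derivative_works]]]
  by (simp add: dir_deriv_def)

lemma dir_deriv_diff:
  "dir_deriv a (\<lambda>w. u w - v w) z = dir_deriv a u z - dir_deriv a v z"
  using dir_deriv_eqI[OF has_derivative_diff[OF u[unfolded frechet_derivative_works]
      v[unfolded frechet_derivative_works]]]
  by (simp add: dir_deriv_def)

end

lemma differentiable_linear:
  fixes u :: "'a::real_normed_vector \<Rightarrow> 'b::real_normed_vector"
    and L :: "'b \<Rightarrow> 'c::real_normed_vector"
  assumes "bounded_linear L" "u differentiable (at z)"
  shows "(\<lambda>w. L (u w)) differentiable (at z)"
  using differentiable_compose[OF bounded_linear_imp_differentiable[OF assms(1)] assms(2)]
  by (simp add: o_def)

lemma dir_deriv_linear:
  fixes u :: "complex \<Rightarrow> 'b::real_normed_vector" and L :: "'b \<Rightarrow> 'c::real_normed_vector"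
  assumes "bounded_linear L" "u differentiable (at z)"
  shows "dir_deriv a (\<lambda>w. L (u w)) z = L (dir_deriv a u z)"
  using dir_deriv_eqI[OF bounded_linear.has_derivative[OF assms(1)
      assms(2)[unfolded frechet_derivative_works]]]
  by (simp add: dir_deriv_def)

lemma differentiable_bilinear:
  fixes u :: "'a::real_normed_vector \<Rightarrow> 'b::real_normed_vector"
    and v :: "'a \<Rightarrow> 'c::real_normed_vector"
    and prod :: "'b \<Rightarrow> 'c \<Rightarrow> 'd::real_normed_vector"
  assumes "bounded_bilinear prod" "u differentiable (at z)" "v differentiable (at z)"
  shows "(\<lambda>w. prod (u w) (v w)) differentiable (at z)"
  using bounded_bilinear.FDERIV[OF assms(1) assms(2,3)[unfolded frechet_derivative_works]]
  unfolding differentiable_def by blast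

lemma dir_deriv_bilinear:
  fixes u :: "complex \<Rightarrow> 'b::real_normed_vector" and v :: "complex \<Rightarrow> 'c::real_normed_vector"
    and prod :: "'b \<Rightarrow> 'c \<Rightarrow> 'd::real_normed_vector"
  assumes "bounded_bilinear prod" "u differentiable (at z)" "v differentiable (at z)"
  shows "dir_deriv a (\<lambda>w. prod (u w) (v w)) z
           = prod (dir_deriv a u z) (v z) + prod (u z) (dir_deriv a v z)"
  using dir_deriv_eqI[OF bounded_bilinear.FDERIV[OF assms(1)
      assms(2,3)[unfolded frechet_derivative_works]]]
  by (simp add: dir_deriv_def add.commute)

lemma dir_deriv_inverse:
  fixes u :: "complex \<Rightarrow> 'b::real_normed_div_algebra"
  assumes "u differentiable (at z)" "u z \<noteq> 0"
  shows "dir_deriv a (\<lambda>w. inverse (u w)) z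
           = - (inverse (u z) * dir_deriv a u z * inverse (u z))"
  using dir_deriv_eqI[OF Deriv.has_derivative_inverse[OF assms(2)
      assms(1)[unfolded frechet_derivative_works]]]
  by (simp add: dir_deriv_def)

lemmas dir_deriv_mult = dir_deriv_bilinear[OF bounded_bilinear_mult]
lemmas dir_deriv_cnj = dir_deriv_linear[OF bounded_linear_cnj]
lemmas dir_deriv_minus = dir_deriv_linear[OF bounded_linear_minus[OF bounded_linear_ident]]

lemmas dir_deriv_arith =
  dir_deriv_add dir_deriv_diff dir_deriv_mult dir_deriv_cnj dir_deriv_minus dir_deriv_inverse

lemma of_real_Im: "complex_of_real (Im w) = (w - cnj w) / (2 * \<i>)"
  by (simp add: complex_eq_iff)

section \<open>Functions generated by holomorphic functions\<close>

(* Closed under derivatives along its own members (holo_alg_dir_deriv), so iterated derivatives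
   along \<zeta> stay differentiable. *)
inductive_set holo_alg :: "complex set \<Rightarrow> (complex \<Rightarrow> complex) set" for S where
  holomorphic: "u holomorphic_on S \<Longrightarrow> u \<in> holo_alg S"
| add [simp]: "u \<in> holo_alg S \<Longrightarrow> v \<in> holo_alg S \<Longrightarrow> (\<lambda>z. u z + v z) \<in> holo_alg S"
| mult [simp]: "u \<in> holo_alg S \<Longrightarrow> v \<in> holo_alg S \<Longrightarrow> (\<lambda>z. u z * v z) \<in> holo_alg S"
| cnj [simp]: "u \<in> holo_alg S \<Longrightarrow> (\<lambda>z. cnj (u z)) \<in> holo_alg S"
| inverse: "u \<in> holo_alg S \<Longrightarrow> \<forall>z\<in>S. u z \<noteq> 0 \<Longrightarrow> (\<lambda>z. inverse (u z)) \<in> holo_alg S"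
| cong: "u \<in> holo_alg S \<Longrightarrow> \<forall>z\<in>S. v z = u z \<Longrightarrow> v \<in> holo_alg S"

lemma holo_alg_const [simp]: "(\<lambda>z. c) \<in> holo_alg S"
  by (rule holo_alg.holomorphic) simp

lemma holo_alg_minus [simp]: "u \<in> holo_alg S \<Longrightarrow> (\<lambda>z. - u z) \<in> holo_alg S"
  using holo_alg.mult[OF holo_alg_const[of "-1"]] by simp

lemma holo_alg_diff [simp]:
  "u \<in> holo_alg S \<Longrightarrow> v \<in> holo_alg S \<Longrightarrow> (\<lambda>z. u z - v z) \<in> holo_alg S"
  using holo_alg.add[OF _ holo_alg_minus] by simp

context
  fixes S :: "complex set"
  assumes S: "open S"
begin

lemma holo_alg_differentiable: "u \<in> holo_alg S \<Longrightarrow> z \<in> S \<Longrightarrow> u differentiable (at z)"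
proof (induction arbitrary: z rule: holo_alg.induct)
  case (holomorphic u)
  then show ?case
    using S by (meson field_differentiable_imp_differentiable holomorphic_on_imp_differentiable_at)
next
  case (add u v)
  then show ?case by (simp add: differentiable_add)
next
  case (mult u v)
  then show ?case by (simp add: differentiable_mult)
next
  case (cnj u)
  then show ?case by (simp add: differentiable_linear[OF bounded_linear_cnj])
next
  case (inverse u)
  then obtain D where "(u has_derivative D) (at z)"
    unfolding differentiable_def by blast
  then have "((\<lambda>w. inverse (u w)) has_derivative
      (\<lambda>h. - (inverse (u z) * D h * inverse (u z)))) (at z)"
    using inverse.hyps(2) inverse.prems by (intro Deriv.has_derivative_inverse) auto
  then show ?case
    unfolding differentiable_def by blast
next
  case (cong u v)
  then obtain D where "(u has_derivative D) (at z)"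
    unfolding differentiable_def by blast
  then have "(v has_derivative D) (at z)"
    by (rule has_derivative_transform_within_open[OF _ S \<open>z \<in> S\<close>]) (use cong.hyps in auto)
  then show ?case
    unfolding differentiable_def by blast
qed

lemma holo_alg_dir_deriv:
  assumes a: "a \<in> holo_alg S" and u: "u \<in> holo_alg S"
  shows "(\<lambda>z. dir_deriv a u z) \<in> holo_alg S"
  using u
proof (induction rule: holo_alg.induct)
  case (holomorphic u)
  have "(\<lambda>z. deriv u z * a z) \<in> holo_alg S"
    using holomorphic_deriv[OF holomorphic S] a by (simp add: holo_alg.holomorphic)
  moreover have "\<forall>z\<in>S. dir_deriv a u z = deriv u z * a z"
    using holomorphic S by (auto intro!: dir_deriv_field holomorphic_derivI)
  ultimately show ?case
    by (rule holo_alg.cong)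
next
  case (add u v)
  show ?case
    by (rule holo_alg.cong[of "\<lambda>z. dir_deriv a u z + dir_deriv a v z"])
      (use add in \<open>simp_all add: dir_deriv_add holo_alg_differentiable\<close>)
next
  case (mult u v)
  show ?case
    by (rule holo_alg.cong[of "\<lambda>z. dir_deriv a u z * v z + u z * dir_deriv a v z"])
      (use mult in \<open>simp_all add: dir_deriv_mult holo_alg_differentiable\<close>)
next
  case (cnj u)
  show ?case
    by (rule holo_alg.cong[of "\<lambda>z. cnj (dir_deriv a u z)"])
      (use cnj in \<open>simp_all add: dir_deriv_cnj holo_alg_differentiable\<close>)
next
  case (inverse u)
  show ?case
    by (rule holo_alg.cong[of "\<lambda>z. - (inverse (u z) * dir_deriv a u z * inverse (u z))"])
      (use inverse in \<open>simp_all add: dir_deriv_inverse holo_alg_differentiable holo_alg.inverse\<close>)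
next
  case (cong u v)
  show ?case
    by (rule holo_alg.cong[of "\<lambda>z. dir_deriv a u z"])
      (use cong in \<open>auto intro: dir_deriv_cong[OF S]\<close>)
qed

end

section \<open>Complex 2\<times>2 matrices\<close>

lemma bounded_bilinear_matrix_mult:
  "bounded_bilinear (\<lambda>(X :: complex^'n^'m) (Y :: complex^'p^'n). X ** Y)"
  unfolding bilinear_conv_bounded_bilinear[symmetric]
  by (auto simp: bilinear_def matrix_add_ldistrib vec_eq_iff matrix_matrix_mult_def
      sum_distrib_left scaleR_sum_right sum.distrib distrib_left distrib_right intro!: linearI)

lemma matrix_add_rdistrib: "(A + B) ** C = A ** C + B ** C"
  for A B :: "'a::semiring_1^'n^'m"
  by (simp add: vec_eq_iff matrix_matrix_mult_def sum.distrib distrib_right)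

lemma mat2_nth [simp]:
  "mat2 a b c d $ 1 $ 1 = a" "mat2 a b c d $ 1 $ 2 = b"
  "mat2 a b c d $ 2 $ 1 = c" "mat2 a b c d $ 2 $ 2 = d"
  by (simp_all add: mat2_def)

lemma mat2_eq_iff:
  "X = Y \<longleftrightarrow>
     X $ 1 $ 1 = Y $ 1 $ 1 \<and> X $ 1 $ 2 = Y $ 1 $ 2 \<and> X $ 2 $ 1 = Y $ 2 $ 1 \<and> X $ 2 $ 2 = Y $ 2 $ 2"
  for X Y :: "'a^2^2"
  by (simp add: vec_eq_iff forall_2)

lemma mat2_eta: "mat2 (X $ 1 $ 1) (X $ 1 $ 2) (X $ 2 $ 1) (X $ 2 $ 2) = X"
  by (simp add: mat2_eq_iff)

lemma mat2_inject [simp]: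
  "mat2 a b c d = mat2 a' b' c' d' \<longleftrightarrow> a = a' \<and> b = b' \<and> c = c' \<and> d = d'"
  by (simp add: mat2_eq_iff)

lemma mat2_zero: "0 = mat2 0 0 0 0"
  by (simp add: mat2_eq_iff)

lemma mat2_add: "mat2 a b c d + mat2 a' b' c' d' = mat2 (a + a') (b + b') (c + c') (d + d')"
  by (simp add: mat2_eq_iff)

lemma mat2_mult:
  "mat2 a b c d ** mat2 a' b' c' d'
     = mat2 (a * a' + b * c') (a * b' + b * d') (c * a' + d * c') (c * b' + d * d')"
  by (simp add: mat2_eq_iff matrix_matrix_mult_def sum_2)

lemma cstar_mat2: "cstar (mat2 a b c d) = mat2 (cnj a) (cnj c) (cnj b) (cnj d)"
  by (simp add: mat2_eq_iff cstar_def)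

lemma smat_mat2: "smat k (mat2 a b c d) = mat2 (k * a) (k * b) (k * c) (k * d)"
  by (simp add: mat2_eq_iff smat_def)

lemma cstar_matrix_mult: "cstar (X ** Y) = cstar Y ** cstar X"
  by (simp add: vec_eq_iff cstar_def matrix_matrix_mult_def mult.commute)

lemma smat_matrix_mult: "smat c X ** Y = smat c (X ** Y)" "X ** smat c Y = smat c (X ** Y)"
  by (simp_all add: vec_eq_iff smat_def matrix_matrix_mult_def sum_distrib_left mult_ac)

lemma bounded_linear_cstar: "bounded_linear cstar"
  unfolding linear_conv_bounded_linear[symmetric]
  by (rule linearI) (simp_all add: vec_eq_iff cstar_def)

lemmas dir_deriv_matrix_mult = dir_deriv_bilinear[OF bounded_bilinear_matrix_mult]
lemmas dir_deriv_cstar = dir_deriv_linear[OF bounded_linear_cstar]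

lemma differentiable_mat2:
  assumes "p differentiable (at z)" "q differentiable (at z)"
    and "r differentiable (at z)" "s differentiable (at z)"
  shows "(\<lambda>w. mat2 (p w) (q w) (r w) (s w)) differentiable (at z)"
proof -
  have bl: "bounded_linear (\<lambda>c. mat2 c 0 0 0)" "bounded_linear (\<lambda>c. mat2 0 c 0 0)"
    "bounded_linear (\<lambda>c. mat2 0 0 c 0)" "bounded_linear (\<lambda>c. mat2 0 0 0 c)"
    by (auto simp: linear_conv_bounded_linear[symmetric] mat2_eq_iff intro!: linearI)
  have "(\<lambda>w. mat2 (p w) 0 0 0 + mat2 0 (q w) 0 0 + mat2 0 0 (r w) 0 + mat2 0 0 0 (s w))
      differentiable (at z)"
    by (intro differentiable_add differentiable_linear[OF bl(1) assms(1)]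
        differentiable_linear[OF bl(2) assms(2)] differentiable_linear[OF bl(3) assms(3)]
        differentiable_linear[OF bl(4) assms(4)])
  then show ?thesis
    by (simp add: mat2_add)
qed

lemma dir_deriv_nth:
  fixes X :: "complex \<Rightarrow> 'b::real_normed_vector^'n^'m"
  assumes "X differentiable (at z)"
  shows "dir_deriv a X z $ i $ j = dir_deriv a (\<lambda>w. X w $ i $ j) z"
  using dir_deriv_linear[OF bounded_linear_compose[OF bounded_linear_vec_nth[of j]
      bounded_linear_vec_nth[of i]] assms]
  by simp

lemma dir_deriv_mat2:
  assumes "p differentiable (at z)" "q differentiable (at z)"
    and "r differentiable (at z)" "s differentiable (at z)"
  shows "dir_deriv a (\<lambda>w. mat2 (p w) (q w) (r w) (s w)) z
           = mat2 (dir_deriv a p z) (dir_deriv a q z) (dir_deriv a r z) (dir_deriv a s z)"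
  by (simp add: mat2_eq_iff dir_deriv_nth differentiable_mat2 assms)

lemma dir_deriv_hermitian_mat2:
  assumes "u differentiable (at z)" "v differentiable (at z)"
  shows "dir_deriv a (\<lambda>w. mat2 (u w) (v w) (cnj (v w)) (u w)) z
           = mat2 (dir_deriv a u z) (dir_deriv a v z) (cnj (dir_deriv a v z)) (dir_deriv a u z)"
  using assms differentiable_linear[OF bounded_linear_cnj assms(2)]
  by (simp add: dir_deriv_mat2 dir_deriv_cnj)

definition mat_holo_alg :: "complex set \<Rightarrow> (complex \<Rightarrow> complex^2^2) \<Rightarrow> bool" where
  "mat_holo_alg S X \<longleftrightarrow> (\<forall>i j. (\<lambda>z. X z $ i $ j) \<in> holo_alg S)"

lemma mat_holo_alg_mat2 [simp]:
  "mat_holo_alg S (\<lambda>z. mat2 (p z) (q z) (r z) (s z))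
     \<longleftrightarrow> p \<in> holo_alg S \<and> q \<in> holo_alg S \<and> r \<in> holo_alg S \<and> s \<in> holo_alg S"
  by (simp add: mat_holo_alg_def forall_2)

lemma mat_holo_alg_const [simp]: "mat_holo_alg S (\<lambda>z. M)"
  by (simp add: mat_holo_alg_def)

lemma mat_holo_alg_add [simp]:
  "mat_holo_alg S X \<Longrightarrow> mat_holo_alg S Y \<Longrightarrow> mat_holo_alg S (\<lambda>z. X z + Y z)"
  by (simp add: mat_holo_alg_def)

lemma mat_holo_alg_mult [simp]:
  "mat_holo_alg S X \<Longrightarrow> mat_holo_alg S Y \<Longrightarrow> mat_holo_alg S (\<lambda>z. X z ** Y z)"
  by (simp add: mat_holo_alg_def matrix_matrix_mult_def sum_2)

lemma mat_holo_alg_cstar [simp]: "mat_holo_alg S X \<Longrightarrow> mat_holo_alg S (\<lambda>z. cstar (X z))"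
  by (simp add: mat_holo_alg_def cstar_def)

context
  fixes S :: "complex set"
  assumes S: "open S"
begin

lemma mat_holo_alg_differentiable:
  assumes "mat_holo_alg S X" "z \<in> S"
  shows "X differentiable (at z)"
proof -
  have "(\<lambda>w. mat2 (X w $ 1 $ 1) (X w $ 1 $ 2) (X w $ 2 $ 1) (X w $ 2 $ 2)) differentiable (at z)"
    using assms unfolding mat_holo_alg_def
    by (auto intro!: differentiable_mat2 holo_alg_differentiable[OF S])
  then show ?thesis
    by (simp add: mat2_eta)
qed

lemma mat_holo_alg_dir_deriv:
  assumes "a \<in> holo_alg S" "mat_holo_alg S X"
  shows "mat_holo_alg S (\<lambda>z. dir_deriv a X z)"
  unfolding mat_holo_alg_def
proof (intro allI)
  fix i j
  have "(\<lambda>z. dir_deriv a (\<lambda>w. X w $ i $ j) z) \<in> holo_alg S"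
    using assms unfolding mat_holo_alg_def by (intro holo_alg_dir_deriv[OF S]) auto
  then show "(\<lambda>z. dir_deriv a X z $ i $ j) \<in> holo_alg S"
    by (rule holo_alg.cong) (simp add: dir_deriv_nth mat_holo_alg_differentiable assms)
qed

end

section \<open>Derivatives of a conjugated frame\<close>

definition frame_op :: "(complex \<Rightarrow> complex) \<Rightarrow> (complex \<Rightarrow> complex^2^2) \<Rightarrow>
    (complex \<Rightarrow> complex^2^2) \<Rightarrow> complex \<Rightarrow> complex^2^2"
  where "frame_op a B M z = dir_deriv a M z + B z ** M z + M z ** cstar (B z)"

lemma dir_deriv_frame_conj:
  assumes "open S" "z \<in> S" and G: "\<And>w. w \<in> S \<Longrightarrow> G w = F w ** M w ** cstar (F w)"
    and F: "F differentiable (at z)" and M: "M differentiable (at z)"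
    and dF: "dir_deriv a F z = F z ** B z"
  shows "dir_deriv a G z = F z ** frame_op a B M z ** cstar (F z)"
proof -
  have "dir_deriv a G z = dir_deriv a (\<lambda>w. F w ** M w ** cstar (F w)) z"
    using assms(1,2) G by (rule dir_deriv_cong)
  also have "\<dots> = (dir_deriv a F z ** M z + F z ** dir_deriv a M z) ** cstar (F z)
      + F z ** M z ** cstar (dir_deriv a F z)"
    using F M differentiable_linear[OF bounded_linear_cstar F]
    by (simp add: dir_deriv_matrix_mult dir_deriv_cstar
        differentiable_bilinear[OF bounded_bilinear_matrix_mult] add.commute)
  also have "\<dots> = F z ** frame_op a B M z ** cstar (F z)"
    by (simp add: frame_op_def dF cstar_matrix_mult matrix_add_ldistrib matrix_add_rdistrib
        matrix_mul_assoc algebra_simps)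
  finally show ?thesis .
qed

lemma frame_op_twice_at_zero:
  assumes "open S" "z \<in> S" "a \<in> holo_alg S" "mat_holo_alg S B" "mat_holo_alg S M" "M z = 0"
  shows "frame_op a B M z = dir_deriv a M z"
    and "frame_op a B (frame_op a B M) z = dir_deriv a (\<lambda>w. dir_deriv a M w) z
           + smat 2 (B z ** dir_deriv a M z + dir_deriv a M z ** cstar (B z))"
proof -
  note diff = mat_holo_alg_differentiable[OF assms(1) _ assms(2)]
  have M': "mat_holo_alg S (\<lambda>w. dir_deriv a M w)"
    using assms(1,3,5) by (rule mat_holo_alg_dir_deriv)
  show M1: "frame_op a B M z = dir_deriv a M z"
    using assms(6) by (simp add: frame_op_def)
  have "dir_deriv a (frame_op a B M) z = dir_deriv a (\<lambda>w. dir_deriv a M w) z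
      + B z ** dir_deriv a M z + dir_deriv a M z ** cstar (B z)"
    using assms(4-6) M' unfolding frame_op_def
    by (simp add: dir_deriv_add dir_deriv_matrix_mult dir_deriv_cstar diff
        differentiable_bilinear[OF bounded_bilinear_matrix_mult]
        differentiable_linear[OF bounded_linear_cstar])
  moreover have "smat 2 X = X + X" for X
    by (simp add: vec_eq_iff smat_def)
  ultimately show "frame_op a B (frame_op a B M) z = dir_deriv a (\<lambda>w. dir_deriv a M w) z
      + smat 2 (B z ** dir_deriv a M z + dir_deriv a M z ** cstar (B z))"
    using M1 by (simp add: frame_op_def[of a B "frame_op a B M"] matrix_add_ldistrib algebra_simps)
qed

section \<open>The frame of a CMC 1 face near a non-front singular point\<close>

lemma holomorphic_nonvanishing_neighbourhood:
  assumes "open D" "p \<in> D" "g analytic_on {p}" "h holomorphic_on D" "g p \<noteq> 0" "h p \<noteq> 0"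
  obtains S where "open S" "p \<in> S" "S \<subseteq> D" "g holomorphic_on S"
    "\<And>z. z \<in> S \<Longrightarrow> g z \<noteq> 0" "\<And>z. z \<in> S \<Longrightarrow> h z \<noteq> 0"
proof -
  obtain e where "e > 0" and g_ball: "g holomorphic_on ball p e"
    using assms(3) analytic_at_ball by blast
  define U where "U = ball p e \<inter> D"
  have U: "open U" "g holomorphic_on U" "h holomorphic_on U"
    unfolding U_def using assms(1,4) g_ball by (auto intro: holomorphic_on_subset)
  define S where "S = U \<inter> g -` (- {0}) \<inter> h -` (- {0})"
  have open_Ug: "open (U \<inter> g -` (- {0}))"
    by (rule continuous_open_preimage) (use U in \<open>auto intro: holomorphic_on_imp_continuous_on\<close>)
  have "open S"
    unfolding S_def
    by (rule continuous_open_preimage[OF _ open_Ug])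
      (auto intro: holomorphic_on_imp_continuous_on holomorphic_on_subset[OF U(3)])
  moreover have "p \<in> S"
    using assms(2,5,6) \<open>e > 0\<close> by (simp add: S_def U_def)
  ultimately show ?thesis
    by (rule that) (auto simp: S_def U_def intro: holomorphic_on_subset[OF U(2)])
qed

locale cmc1_chart =
  fixes S :: "complex set" and g h :: "complex \<Rightarrow> complex"
    and F :: "complex \<Rightarrow> complex^2^2" and p :: complex
  assumes open_S: "open S" and p_in_S: "p \<in> S"
    and g_holomorphic: "g holomorphic_on S" and h_holomorphic: "h holomorphic_on S"
    and g_nonzero: "\<And>z. z \<in> S \<Longrightarrow> g z \<noteq> 0" and h_nonzero: "\<And>z. z \<in> S \<Longrightarrow> h z \<noteq> 0"
    and F_holomorphic: "\<And>i j. (\<lambda>z. F z $ i $ j) holomorphic_on S"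
    and F_ode: "\<And>z i j. z \<in> S \<Longrightarrow> ((\<lambda>w. F w $ i $ j) has_field_derivative
      (F z ** smat (h z) (mat2 (g z) (- ((g z)^2)) 1 (- g z))) $ i $ j) (at z)"
    and g_p_unit: "norm (g p) = 1"
    and deriv_g_p_nonzero: "deriv g p \<noteq> 0"
    and phi_p_imaginary: "Re (phi_fn g h p) = 0"
begin

abbreviation zeta :: "complex \<Rightarrow> complex" where "zeta \<equiv> zeta_coef g h p"

(* lam is the paper's \<lambda> = 1 - |g|^2 taken complex-valued; omega_zeta = \<omega>(\<zeta>), and A_zeta and
   frame_coeff n are the B and M_n of the opening comment. *)
definition lam :: "complex \<Rightarrow> complex" where "lam z = 1 - g z * cnj (g z)"

definition omega_zeta :: "complex \<Rightarrow> complex" where "omega_zeta z = zeta z * h z"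

definition A_zeta :: "complex \<Rightarrow> complex^2^2"
  where "A_zeta z = smat (omega_zeta z) (mat2 (g z) (- ((g z)^2)) 1 (- g z))"

definition frame_coeff :: "nat \<Rightarrow> complex \<Rightarrow> complex^2^2"
  where "frame_coeff n = (frame_op zeta A_zeta ^^ n) (\<lambda>z. e3)"

lemma zeta_eq:
  "z \<in> S \<Longrightarrow> zeta z = \<i> * inverse (g z) * inverse (h z) + kappa g p * (lam z * lam z)"
proof -
  have "complex_of_real ((1 - (norm (g z))^2)^2) = lam z * lam z"
    using complex_norm_square[of "g z"] by (simp add: lam_def power2_eq_square)
  then show "z \<in> S \<Longrightarrow> ?thesis"
    by (simp add: zeta_coef_def divide_inverse)
qed

lemma differentiable_at_holo_alg [simp]:
  "u \<in> holo_alg S \<Longrightarrow> z \<in> S \<Longrightarrow> u differentiable (at z)"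
  by (rule holo_alg_differentiable[OF open_S])

lemma holo_alg_basic [simp]:
  "g \<in> holo_alg S" "h \<in> holo_alg S" "(\<lambda>z. inverse (g z)) \<in> holo_alg S"
  "(\<lambda>z. inverse (h z)) \<in> holo_alg S" "deriv g \<in> holo_alg S" "lam \<in> holo_alg S"
  "zeta \<in> holo_alg S" "omega_zeta \<in> holo_alg S"
proof -
  show g: "g \<in> holo_alg S" and h: "h \<in> holo_alg S"
    by (simp_all add: holo_alg.holomorphic g_holomorphic h_holomorphic)
  show "(\<lambda>z. inverse (g z)) \<in> holo_alg S" "(\<lambda>z. inverse (h z)) \<in> holo_alg S"
    "deriv g \<in> holo_alg S"
    by (simp_all add: g h holo_alg.inverse g_nonzero h_nonzero holo_alg.holomorphic
        holomorphic_deriv[OF g_holomorphic open_S])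
  show "lam \<in> holo_alg S"
    unfolding lam_def[abs_def] using g by simp
  show zeta: "zeta \<in> holo_alg S"
    by (rule holo_alg.cong[OF _ ballI[OF zeta_eq]])
      (use g h g_nonzero h_nonzero \<open>lam \<in> holo_alg S\<close> in \<open>simp add: holo_alg.inverse\<close>)
  show "omega_zeta \<in> holo_alg S"
    unfolding omega_zeta_def[abs_def] using zeta h by simp
qed

lemma holo_alg_dir_deriv_zeta [simp]: "u \<in> holo_alg S \<Longrightarrow> (\<lambda>z. dir_deriv zeta u z) \<in> holo_alg S"
  by (rule holo_alg_dir_deriv[OF open_S holo_alg_basic(7)])

lemma mat_holo_alg_F: "mat_holo_alg S F"
  by (simp add: mat_holo_alg_def holo_alg.holomorphic F_holomorphic)

lemma mat_holo_alg_A_zeta: "mat_holo_alg S A_zeta"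
  by (simp add: A_zeta_def[abs_def] smat_mat2 power2_eq_square)

lemma dir_deriv_holomorphic:
  "u holomorphic_on S \<Longrightarrow> z \<in> S \<Longrightarrow> dir_deriv zeta u z = deriv u z * zeta z"
  by (rule dir_deriv_field) (rule holomorphic_derivI[OF _ open_S])

lemma dir_deriv_F: "z \<in> S \<Longrightarrow> dir_deriv zeta F z = F z ** A_zeta z"
  by (simp add: vec_eq_iff dir_deriv_nth mat_holo_alg_differentiable[OF open_S mat_holo_alg_F]
      dir_deriv_holomorphic F_holomorphic DERIV_imp_deriv[OF F_ode] A_zeta_def omega_zeta_def
      smat_matrix_mult) (simp add: smat_def mult_ac)

lemma mat_holo_alg_frame_coeff: "mat_holo_alg S (frame_coeff n)"
proof (induction n)
  case (Suc n)
  then show ?case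
    using mat_holo_alg_dir_deriv[OF open_S, of zeta "frame_coeff n"] mat_holo_alg_A_zeta
    by (simp add: frame_coeff_def frame_op_def[abs_def])
qed (simp add: frame_coeff_def)

lemma dir_deriv_pow_cmc1_f:
  "z \<in> S \<Longrightarrow> dir_deriv_pow n zeta (cmc1_f F) z = F z ** frame_coeff n z ** cstar (F z)"
proof (induction n arbitrary: z)
  case 0
  then show ?case
    by (simp add: cmc1_f_def frame_coeff_def)
next
  case (Suc n)
  have "dir_deriv zeta (dir_deriv_pow n zeta (cmc1_f F)) z
      = F z ** frame_op zeta A_zeta (frame_coeff n) z ** cstar (F z)"
    using Suc open_S mat_holo_alg_differentiable[OF open_S] mat_holo_alg_F mat_holo_alg_frame_coeff
    by (intro dir_deriv_frame_conj dir_deriv_F) auto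
  then show ?case
    by (simp add: frame_coeff_def)
qed

lemma cnj_g_p: "cnj (g p) = inverse (g p)"
  using complex_norm_square[of "g p"] g_p_unit g_nonzero[OF p_in_S] by (simp add: field_simps)

lemma lam_p: "lam p = 0"
  using g_nonzero[OF p_in_S] by (simp add: lam_def cnj_g_p)

lemma zeta_p: "zeta p = \<i> * inverse (g p) * inverse (h p)"
  by (simp add: zeta_eq[OF p_in_S] lam_p)

lemma omega_zeta_eq:
  "z \<in> S \<Longrightarrow> omega_zeta z = \<i> * inverse (g z) + kappa g p * (lam z * lam z * h z)"
  using h_nonzero[of z] by (simp add: omega_zeta_def zeta_eq field_simps)

lemma omega_zeta_p: "omega_zeta p = \<i> * inverse (g p)"
  by (simp add: omega_zeta_eq[OF p_in_S] lam_p)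

lemma dir_deriv_g: "z \<in> S \<Longrightarrow> dir_deriv zeta g z = deriv g z * zeta z"
  and dir_deriv_h: "z \<in> S \<Longrightarrow> dir_deriv zeta h z = deriv h z * zeta z"
  by (simp_all add: dir_deriv_holomorphic g_holomorphic h_holomorphic)

lemma dir_deriv_lam: "z \<in> S \<Longrightarrow>
    dir_deriv zeta lam z = - (dir_deriv zeta g z * cnj (g z) + g z * cnj (dir_deriv zeta g z))"
  unfolding lam_def[abs_def] by (simp add: dir_deriv_arith)

lemma dir_deriv_omega_zeta: "z \<in> S \<Longrightarrow> dir_deriv zeta omega_zeta z
    = - (\<i> * dir_deriv zeta g z * inverse (g z) * inverse (g z))
      + kappa g p * (2 * lam z * dir_deriv zeta lam z * h z + lam z * lam z * dir_deriv zeta h z)"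
  using g_nonzero[of z]
  by (simp add: dir_deriv_cong[OF open_S _ omega_zeta_eq] dir_deriv_arith algebra_simps)

lemma dir_deriv_zeta_p: "dir_deriv zeta zeta p
    = - \<i> * (dir_deriv zeta g p * inverse (g p) * inverse (g p) * inverse (h p)
             + dir_deriv zeta h p * inverse (g p) * inverse (h p) * inverse (h p))"
  using p_in_S g_nonzero[OF p_in_S] h_nonzero[OF p_in_S]
  by (simp add: dir_deriv_cong[OF open_S _ zeta_eq] dir_deriv_arith lam_p algebra_simps)

lemma dir_deriv2_g_p: "dir_deriv zeta (\<lambda>z. dir_deriv zeta g z) p
    = deriv (deriv g) p * zeta p * zeta p + deriv g p * dir_deriv zeta zeta p"
  using p_in_S holomorphic_deriv[OF g_holomorphic open_S]
  by (simp add: dir_deriv_cong[OF open_S _ dir_deriv_g] dir_deriv_mult dir_deriv_holomorphic)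

lemma dir_deriv2_omega_zeta_p: "dir_deriv zeta (\<lambda>z. dir_deriv zeta omega_zeta z) p
    = - \<i> * (dir_deriv zeta (\<lambda>z. dir_deriv zeta g z) p * inverse (g p) * inverse (g p))
      + 2 * \<i> * dir_deriv zeta g p * dir_deriv zeta g p
          * inverse (g p) * inverse (g p) * inverse (g p)
      + 2 * kappa g p * dir_deriv zeta lam p * dir_deriv zeta lam p * h p"
  using p_in_S g_nonzero[OF p_in_S]
  by (simp add: dir_deriv_cong[OF open_S _ dir_deriv_omega_zeta] dir_deriv_arith lam_p)
    (simp add: algebra_simps)

lemma cnj_deriv_g_p: "cnj (deriv g p) = - deriv g p * cnj (h p) / ((g p)^4 * h p)"
proof -
  have "cnj (phi_fn g h p) = - phi_fn g h p"
    using phi_p_imaginary by (simp add: complex_eq_iff)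
  then have "cnj (deriv g p) / ((cnj (g p))^2 * cnj (h p)) = - (deriv g p / ((g p)^2 * h p))"
    by (simp add: phi_fn_def)
  then show ?thesis
    using g_nonzero[OF p_in_S] h_nonzero[OF p_in_S] unfolding cnj_g_p by (simp add: field_simps)
qed

lemma deriv_phi_p: "deriv (phi_fn g h) p
    = (deriv (deriv g) p * ((g p)^2 * h p)
        - deriv g p * (2 * g p * deriv g p * h p + (g p)^2 * deriv h p))
      / ((g p)^2 * h p * ((g p)^2 * h p))"
proof -
  have "((\<lambda>z. deriv g z / ((g z)^2 * h z)) has_field_derivative
      (deriv (deriv g) p * ((g p)^2 * h p)
        - deriv g p * (of_nat 2 * (deriv g p * (g p)^(2 - Suc 0)) * h p + deriv h p * (g p)^2))
      / ((g p)^2 * h p * ((g p)^2 * h p))) (at p)"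
    using g_nonzero[OF p_in_S] h_nonzero[OF p_in_S]
    by (intro DERIV_divide DERIV_mult DERIV_power holomorphic_derivI[OF _ open_S p_in_S]
        holomorphic_deriv[OF g_holomorphic open_S] g_holomorphic h_holomorphic) simp
  then show ?thesis
    unfolding phi_fn_def[abs_def] by (simp add: DERIV_imp_deriv algebra_simps)
qed

definition diag1 :: "complex \<Rightarrow> complex"
  where "diag1 z = omega_zeta z * g z + cnj (omega_zeta z * g z)"

definition offdiag1 :: "complex \<Rightarrow> complex"
  where "offdiag1 z = omega_zeta z * (g z * g z) + cnj (omega_zeta z)"

lemma holo_alg_diag1 [simp]: "diag1 \<in> holo_alg S"
  and holo_alg_offdiag1 [simp]: "offdiag1 \<in> holo_alg S"
  by (simp_all add: diag1_def[abs_def] offdiag1_def[abs_def])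

lemma frame_coeff_1: "frame_coeff 1 z = mat2 (diag1 z) (offdiag1 z) (cnj (offdiag1 z)) (diag1 z)"
  by (simp add: frame_coeff_def frame_op_def e3_def A_zeta_def diag1_def offdiag1_def
      smat_mat2 cstar_mat2 mat2_mult mat2_add power2_eq_square algebra_simps)

lemma frame_coeff_1_p: "frame_coeff 1 p = 0"
  using g_nonzero[OF p_in_S] unfolding frame_coeff_1
  by (simp add: diag1_def offdiag1_def omega_zeta_p cnj_g_p mat2_zero field_simps)

lemma frame_coeff_2_3_p:
  defines "D \<equiv> mat2 (dir_deriv zeta diag1 p) (dir_deriv zeta offdiag1 p)
      (cnj (dir_deriv zeta offdiag1 p)) (dir_deriv zeta diag1 p)"
  shows "frame_coeff 2 p = D"
    and "frame_coeff 3 p = mat2 (dir_deriv zeta (\<lambda>z. dir_deriv zeta diag1 z) p)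
        (dir_deriv zeta (\<lambda>z. dir_deriv zeta offdiag1 z) p)
        (cnj (dir_deriv zeta (\<lambda>z. dir_deriv zeta offdiag1 z) p))
        (dir_deriv zeta (\<lambda>z. dir_deriv zeta diag1 z) p)
      + smat 2 (A_zeta p ** D + D ** cstar (A_zeta p))"
proof -
  have frame_coeff_Suc: "frame_coeff (Suc n) = frame_op zeta A_zeta (frame_coeff n)" for n
    by (simp add: frame_coeff_def)
  note twice = frame_op_twice_at_zero[OF open_S p_in_S holo_alg_basic(7) mat_holo_alg_A_zeta
      mat_holo_alg_frame_coeff frame_coeff_1_p]
  have frame_coeff_1_fun:
    "frame_coeff 1 = (\<lambda>z. mat2 (diag1 z) (offdiag1 z) (cnj (offdiag1 z)) (diag1 z))"
    by (intro ext frame_coeff_1)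
  have D: "dir_deriv zeta (frame_coeff 1) z
      = mat2 (dir_deriv zeta diag1 z) (dir_deriv zeta offdiag1 z)
          (cnj (dir_deriv zeta offdiag1 z)) (dir_deriv zeta diag1 z)" if "z \<in> S" for z
    unfolding frame_coeff_1_fun using that by (simp add: dir_deriv_hermitian_mat2)
  show "frame_coeff 2 p = D"
    using twice(1) D[OF p_in_S] by (simp add: numeral_2_eq_2 frame_coeff_Suc D_def)
  have "dir_deriv zeta (\<lambda>w. dir_deriv zeta (frame_coeff 1) w) p
      = dir_deriv zeta (\<lambda>z. mat2 (dir_deriv zeta diag1 z) (dir_deriv zeta offdiag1 z)
          (cnj (dir_deriv zeta offdiag1 z)) (dir_deriv zeta diag1 z)) p"
    by (rule dir_deriv_cong[OF open_S p_in_S D])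
  also have "\<dots> = mat2 (dir_deriv zeta (\<lambda>z. dir_deriv zeta diag1 z) p)
        (dir_deriv zeta (\<lambda>z. dir_deriv zeta offdiag1 z) p)
        (cnj (dir_deriv zeta (\<lambda>z. dir_deriv zeta offdiag1 z) p))
        (dir_deriv zeta (\<lambda>z. dir_deriv zeta diag1 z) p)"
    by (simp add: dir_deriv_hermitian_mat2 p_in_S)
  finally show "frame_coeff 3 p = mat2 (dir_deriv zeta (\<lambda>z. dir_deriv zeta diag1 z) p)
        (dir_deriv zeta (\<lambda>z. dir_deriv zeta offdiag1 z) p)
        (cnj (dir_deriv zeta (\<lambda>z. dir_deriv zeta offdiag1 z) p))
        (dir_deriv zeta (\<lambda>z. dir_deriv zeta diag1 z) p)
      + smat 2 (A_zeta p ** D + D ** cstar (A_zeta p))"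
    using twice(2) D[OF p_in_S] by (simp add: numeral_3_eq_3 frame_coeff_Suc D_def)
qed

lemma dir_deriv_diag1: "z \<in> S \<Longrightarrow> dir_deriv zeta diag1 z
    = dir_deriv zeta omega_zeta z * g z + omega_zeta z * dir_deriv zeta g z
      + cnj (dir_deriv zeta omega_zeta z * g z + omega_zeta z * dir_deriv zeta g z)"
  unfolding diag1_def[abs_def] by (simp add: dir_deriv_arith)

lemma dir_deriv_offdiag1: "z \<in> S \<Longrightarrow> dir_deriv zeta offdiag1 z
    = dir_deriv zeta omega_zeta z * (g z * g z) + 2 * omega_zeta z * g z * dir_deriv zeta g z
      + cnj (dir_deriv zeta omega_zeta z)"
  unfolding offdiag1_def[abs_def] by (simp add: dir_deriv_arith algebra_simps)

lemma dir_deriv2_diag1_p_expanded: "dir_deriv zeta (\<lambda>z. dir_deriv zeta diag1 z) p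
    = dir_deriv zeta (\<lambda>z. dir_deriv zeta omega_zeta z) p * g p
      + 2 * dir_deriv zeta omega_zeta p * dir_deriv zeta g p
      + omega_zeta p * dir_deriv zeta (\<lambda>z. dir_deriv zeta g z) p
      + cnj (dir_deriv zeta (\<lambda>z. dir_deriv zeta omega_zeta z) p * g p
      + 2 * dir_deriv zeta omega_zeta p * dir_deriv zeta g p
      + omega_zeta p * dir_deriv zeta (\<lambda>z. dir_deriv zeta g z) p)"
  using p_in_S
  by (simp add: dir_deriv_cong[OF open_S _ dir_deriv_diag1] dir_deriv_arith algebra_simps)

lemma dir_deriv2_offdiag1_p_expanded: "dir_deriv zeta (\<lambda>z. dir_deriv zeta offdiag1 z) p
    = dir_deriv zeta (\<lambda>z. dir_deriv zeta omega_zeta z) p * (g p * g p)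
      + 4 * dir_deriv zeta omega_zeta p * g p * dir_deriv zeta g p
      + 2 * omega_zeta p * (dir_deriv zeta g p * dir_deriv zeta g p
        + g p * dir_deriv zeta (\<lambda>z. dir_deriv zeta g z) p)
      + cnj (dir_deriv zeta (\<lambda>z. dir_deriv zeta omega_zeta z) p)"
  using p_in_S
  by (simp add: dir_deriv_cong[OF open_S _ dir_deriv_offdiag1] dir_deriv_arith algebra_simps)

lemma dir_deriv_omega_zeta_p:
  "dir_deriv zeta omega_zeta p = - (\<i> * dir_deriv zeta g p * inverse (g p) * inverse (g p))"
  by (simp add: dir_deriv_omega_zeta[OF p_in_S] lam_p)

lemma dir_deriv_diag1_p: "dir_deriv zeta diag1 p = 0"
  using g_nonzero[OF p_in_S]
  by (simp add: dir_deriv_diag1[OF p_in_S] dir_deriv_omega_zeta_p omega_zeta_p field_simps)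

lemma dir_deriv_offdiag1_p:
  "dir_deriv zeta offdiag1 p = - 2 * \<i> * complex_of_real (Im (phi_fn g h p)) * g p"
  using g_nonzero[OF p_in_S] h_nonzero[OF p_in_S]
  unfolding dir_deriv_offdiag1[OF p_in_S] dir_deriv_omega_zeta_p of_real_Im
  apply (simp add: omega_zeta_p dir_deriv_g[OF p_in_S] zeta_p phi_fn_def cnj_g_p cnj_deriv_g_p
      field_simps)
  by algebra

lemma frame_coeff_2_p: "frame_coeff 2 p
    = smat (- 2 * \<i> * complex_of_real (Im (phi_fn g h p))) (mat2 0 (g p) (- cnj (g p)) 0)"
  by (simp add: frame_coeff_2_3_p(1) dir_deriv_diag1_p dir_deriv_offdiag1_p smat_mat2)

lemma frame_coeff_2_p_correction:
  "A_zeta p ** frame_coeff 2 p + frame_coeff 2 p ** cstar (A_zeta p)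
     = smat (4 * complex_of_real (Im (phi_fn g h p))) (mat2 1 (g p) (cnj (g p)) 1)"
  using g_nonzero[OF p_in_S]
  by (simp add: frame_coeff_2_p A_zeta_def omega_zeta_p cnj_g_p smat_mat2 mat2_mult mat2_add
      cstar_mat2 field_simps power2_eq_square power4_eq_xxxx)

(* The choice of \<kappa> enters here: at p, \<kappa> g h = -\<i>/(2 \<phi>) = -1/(2 Im \<phi>). *)
lemma dir_deriv2_diag1_p: "dir_deriv zeta (\<lambda>z. dir_deriv zeta diag1 z) p
    = - 8 * complex_of_real (Im (phi_fn g h p))"
  using g_nonzero[OF p_in_S] h_nonzero[OF p_in_S] deriv_g_p_nonzero
  unfolding dir_deriv2_diag1_p_expanded dir_deriv2_omega_zeta_p dir_deriv2_g_p
    dir_deriv_omega_zeta_p dir_deriv_lam[OF p_in_S] dir_deriv_zeta_p of_real_Im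
  apply (simp add: omega_zeta_p dir_deriv_g[OF p_in_S] dir_deriv_h[OF p_in_S] zeta_p phi_fn_def
      cnj_g_p cnj_deriv_g_p kappa_def)
  apply (simp add: field_simps)
  by algebra

lemma dir_deriv2_offdiag1_p: "dir_deriv zeta (\<lambda>z. dir_deriv zeta offdiag1 z) p
    = (2 * \<i> * complex_of_real (Im (phi_fn g h p) * Im (V_op g (phi_fn g h) p))
       - 8 * complex_of_real (Im (phi_fn g h p))) * g p"
  using g_nonzero[OF p_in_S] h_nonzero[OF p_in_S] deriv_g_p_nonzero
  unfolding dir_deriv2_offdiag1_p_expanded dir_deriv2_omega_zeta_p dir_deriv2_g_p
    dir_deriv_omega_zeta_p dir_deriv_lam[OF p_in_S] dir_deriv_zeta_p of_real_mult of_real_Im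
    V_op_def deriv_phi_p
  apply (simp add: omega_zeta_p dir_deriv_g[OF p_in_S] dir_deriv_h[OF p_in_S] zeta_p phi_fn_def
      cnj_g_p cnj_deriv_g_p kappa_def)
  apply (simp add: field_simps)
  by algebra

lemma frame_coeff_3_p: "frame_coeff 3 p
    = smat (2 * \<i> * complex_of_real (Im (phi_fn g h p) * Im (V_op g (phi_fn g h) p)))
        (mat2 0 (g p) (- cnj (g p)) 0)"
  unfolding frame_coeff_2_3_p(2) frame_coeff_2_3_p(1)[symmetric] frame_coeff_2_p_correction
    dir_deriv2_diag1_p dir_deriv2_offdiag1_p
  by (simp add: smat_mat2 mat2_add algebra_simps)

end

theorem lemma4p7:
  fixes D :: "complex set" and g h :: "complex \<Rightarrow> complex"
    and F :: "complex \<Rightarrow> complex^2^2" and p :: complex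
  assumes D: "open D" "connected D" "p \<in> D"
    and g_mero: "g nicely_meromorphic_on D"
    and h_hol: "h holomorphic_on D"
    and metric_reg: "\<forall>z\<in>D. \<not> is_pole g z \<longrightarrow> h z \<noteq> 0"
    and metric_pole: "\<forall>z\<in>D. is_pole g z \<longrightarrow> (\<exists>c. c \<noteq> 0 \<and> ((\<lambda>w. (g w)^2 * h w) \<longlongrightarrow> c) (at z))"
    and lambda_nonzero: "\<exists>z\<in>D. \<not> is_pole g z \<and> norm (g z) \<noteq> 1"
    and F_hol: "\<forall>i j. (\<lambda>z. F z $ i $ j) holomorphic_on D"
    and F_SL2: "\<forall>z\<in>D. det (F z) = 1"
    and F_ode: "\<forall>z\<in>D. \<not> is_pole g z \<longrightarrow> (\<forall>i j. ((\<lambda>w. F w $ i $ j) has_field_derivative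
                  (F z ** smat (h z) (mat2 (g z) (- ((g z)^2)) 1 (- g z))) $ i $ j) (at z))"
    and p_reg: "\<not> is_pole g p"
    and p_sing: "norm (g p) = 1"
    and p_nondeg: "deriv g p \<noteq> 0"
    and p_nonfront: "Re (phi_fn g h p) = 0"
  shows "dir_deriv_pow 2 (zeta_coef g h p) (cmc1_f F) p
           = smat (- 2 * \<i> * complex_of_real (Im (phi_fn g h p)))
               (F p ** mat2 0 (g p) (- cnj (g p)) 0 ** cstar (F p))
       \<and> dir_deriv_pow 3 (zeta_coef g h p) (cmc1_f F) p
           = smat (2 * \<i> * complex_of_real (Im (phi_fn g h p) * Im (V_op g (phi_fn g h) p)))
               (F p ** mat2 0 (g p) (- cnj (g p)) 0 ** cstar (F p))"
proof -
  have "g p \<noteq> 0" "h p \<noteq> 0"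
    using p_sing metric_reg D(3) p_reg by auto
  then obtain S where S: "open S" "p \<in> S" "S \<subseteq> D" "g holomorphic_on S"
    "\<And>z. z \<in> S \<Longrightarrow> g z \<noteq> 0" "\<And>z. z \<in> S \<Longrightarrow> h z \<noteq> 0"
    using holomorphic_nonvanishing_neighbourhood[OF D(1,3) _ h_hol]
      nicely_meromorphic_on_imp_analytic_at[OF g_mero D(3) p_reg] by metis
  have F_ode_S: "((\<lambda>w. F w $ i $ j) has_field_derivative
      (F z ** smat (h z) (mat2 (g z) (- ((g z)^2)) 1 (- g z))) $ i $ j) (at z)" if "z \<in> S" for z i j
    using F_ode that S(3) not_is_pole_holomorphic[OF S(1) that S(4)] by blast
  interpret cmc1_chart S g h F p
    by unfold_locales (use S F_ode_S p_sing p_nondeg p_nonfront holomorphic_on_subset[OF h_hol S(3)]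
        holomorphic_on_subset[OF F_hol[rule_format] S(3)] in auto)
  show ?thesis
    using dir_deriv_pow_cmc1_f[OF p_in_S]
    by (simp add: frame_coeff_2_p frame_coeff_3_p smat_matrix_mult)
qed

end
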